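(* Under Assumptions 1, 2 and 3, let $\lambda_1>0$ be arbitrary and $\lambda_2=19\sqrt{\nu_n\rho_n n}$, and let $(\hat S,\hat L)$ and $\hat{\mathcal O}$ be as in the context. Then there is an absolute constant $c>0$ such that, with probability at least $1-c/n$, $\hat{\mathcal O}\cap\mathcal I=\emptyset$.
   Context: Let $n\ge2$ and let $[n]=\mathcal I\sqcup\mathcal O$ be a partition into inliers $\mathcal I$ and outliers $\mathcal O$, $s=|\mathcal O|$. Write $I=\mathcal I\times\mathcal I$ and $O=([n]\times[n])\setminus I$. For $M\in\mathbb R^{n\times n}$ and $\mathcal S\subset[n]\times[n]$, $M_{|\mathcal S}=\mathbb 1_{\mathcal S}\odot M$ ($\odot$ entrywise product, $\mathbb 1_{\mathcal S}$ indicator matrix); $(\cdot)_+$ is the entrywise positive part; $M_{\cdot,j}$, $M_{j,\cdot}$ denote the $j$-th column and row. Let $\rho_n\in(0,1/2]$, $\gamma_n\in(0,1]$, $k\ge1$. $L^*$ is a symmetric $n\times n$ matrix of rank $k$ with entries in $[0,\rho_n]$ and $L^*_{ij}=0$ whenever $i\in\mathcal O$ or $j\in\mathcal O$. $S^*$ is an $n\times n$ matrix with entries in $[0,\gamma_n]$, zero diagonal, $S^*_{\cdot,j}=0$ for all $j\in\mathcal I$, and $L^*+S^*+(S^* )^\top$ has entries in $[0,1]$. The adjacency matrix $A$ is symmetric with zero diagonal and $(A_{ij})_{i<j}$ are independent, $A_{ij}\sim\mathrm{Bernoulli}((L^*+S^*+(S^* )^\top)_{ij})$. The sampling matrix $\Omega$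 is symmetric with zero diagonal, $(\Omega_{ij})_{i<j}$ are independent $\mathrm{Bernoulli}(\Pi_{ij})$, $\Omega$ independent of $A$, $\Pi=\mathbb E[\Omega]$. $\Sigma=A-\mathbb E[A]$. Norms: $\|M\|_{L_2(\Pi)}^2=\sum_{i,j}\Pi_{ij}M_{ij}^2$, $\|M\|_{2,1}=\sum_j(\sum_iM_{ij}^2)^{1/2}$, $\|M\|_{2,\infty}=\max_j(\sum_iM_{ij}^2)^{1/2}$, $\|\cdot\|_F$ Frobenius, $\|\cdot\|_*$ nuclear, $\|\cdot\|_{op}$ operator norm, $\|M\|_\infty=\max_{ij}|M_{ij}|$. Assumption 1: there is $\mu_n>0$ with $\Pi_{ij}\ge\mu_n$ for all $(i,j)\in I$, $i\neq j$; and $\nu_n,\tilde\nu_n\in(0,1]$ satisfy $\sum_{j\in\mathcal I}\Pi_{ij}\le\nu_n n$ for all $i\in\mathcal I$ and $\sum_{j\in\mathcal O}\Pi_{ij}\le\tilde\nu_n s$ for all $i\in[n]$. Assumption 2: $\nu_n\rho_n\ge\log(n)/n$ and $\tilde\nu_n\gamma_n\ge\log(n)/n$. Assumption 3: $\nu_n\rho_n n\ge\tilde\nu_n\gamma_n s$. Estimator: for $\lambda_1,\lambda_2>0$, $\mathcal F(S,L)=\frac12\|\Omega\odot(A-L-S-S^\top)\|_F^2+\lambda_1\|L\|_*+\lambda_2\|S\|_{2,1}$; $(\hat S,\hat L)$ is any minimizer of $\mathcal F$ over $S\in[0,1]^{n\times n}$ and symmetric $L\in[0,\rho_n]^{n\times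 n}$, and (standing assumption that the upper box constraint on $S$ is inactive) $\hat S$ also minimizes $S\mapsto\mathcal F(S,\hat L)$ over nonnegative $S\in\mathbb R_+^{n\times n}$. The detected outliers are $\hat{\mathcal O}=\{j\in[n]:\hat S_{\cdot,j}\ne0\}$. *)

theory Defs
  imports "HOL-Probability.Probability" "Jordan_Normal_Form.DL_Rank"
begin

text \<open>Matrices on [n] are represented as functions nat => nat => real; only the
  entries with indices below n are meaningful. Index set [n] = {..<n}.\<close>

definition mrank :: "nat \<Rightarrow> (nat \<Rightarrow> nat \<Rightarrow> real) \<Rightarrow> nat" where
  "mrank n M = vec_space.rank n (mat n n (\<lambda>(i,j). M i j) :: real mat)"

definition opnorm :: "nat \<Rightarrow> (nat \<Rightarrow> nat \<Rightarrow> real) \<Rightarrow> real" where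
  "opnorm n M = Sup {sqrt (\<Sum>i<n. (\<Sum>j<n. M i j * v j)^2) | v :: nat \<Rightarrow> real.
                       (\<Sum>j<n. (v j)^2) \<le> 1}"

text \<open>Nuclear norm, as the dual norm of the operator norm (= sum of singular values).\<close>
definition nucnorm :: "nat \<Rightarrow> (nat \<Rightarrow> nat \<Rightarrow> real) \<Rightarrow> real" where
  "nucnorm n M = Sup {(\<Sum>i<n. \<Sum>j<n. M i j * X i j) | X. opnorm n X \<le> 1}"

definition norm21 :: "nat \<Rightarrow> (nat \<Rightarrow> nat \<Rightarrow> real) \<Rightarrow> real" where
  "norm21 n M = (\<Sum>j<n. sqrt (\<Sum>i<n. (M i j)^2))"

definition objF :: "nat \<Rightarrow> (nat \<Rightarrow> nat \<Rightarrow> real) \<Rightarrow> (nat \<Rightarrow> nat \<Rightarrow> real) \<Rightarrow> real \<Rightarrow> real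
     \<Rightarrow> (nat \<Rightarrow> nat \<Rightarrow> real) \<Rightarrow> (nat \<Rightarrow> nat \<Rightarrow> real) \<Rightarrow> real" where
  "objF n Om A lam1 lam2 S L =
     (1/2) * (\<Sum>i<n. \<Sum>j<n. (Om i j * (A i j - L i j - S i j - S j i))^2)
     + lam1 * nucnorm n L + lam2 * norm21 n S"

text \<open>(Shat, Lhat) is a minimizer of F over S in [0,1]^{n x n} and symmetric L in [0,rho]^{n x n},
  and (standing assumption) Shat also minimizes S |-> F(S,Lhat) over nonnegative S.\<close>
definition is_estimator :: "nat \<Rightarrow> real \<Rightarrow> (nat \<Rightarrow> nat \<Rightarrow> real) \<Rightarrow> (nat \<Rightarrow> nat \<Rightarrow> real) \<Rightarrow> real \<Rightarrow> real
     \<Rightarrow> (nat \<Rightarrow> nat \<Rightarrow> real) \<Rightarrow> (nat \<Rightarrow> nat \<Rightarrow> real) \<Rightarrow> bool" where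
  "is_estimator n rho Om A lam1 lam2 Sh Lh \<longleftrightarrow>
     (\<forall>i<n. \<forall>j<n. 0 \<le> Sh i j \<and> Sh i j \<le> 1) \<and>
     (\<forall>i<n. \<forall>j<n. Lh i j = Lh j i \<and> 0 \<le> Lh i j \<and> Lh i j \<le> rho) \<and>
     (\<forall>S L. (\<forall>i<n. \<forall>j<n. 0 \<le> S i j \<and> S i j \<le> 1) \<longrightarrow>
            (\<forall>i<n. \<forall>j<n. L i j = L j i \<and> 0 \<le> L i j \<and> L i j \<le> rho) \<longrightarrow>
            objF n Om A lam1 lam2 Sh Lh \<le> objF n Om A lam1 lam2 S L) \<and>
     (\<forall>S. (\<forall>i<n. \<forall>j<n. 0 \<le> S i j) \<longrightarrow>
            objF n Om A lam1 lam2 Sh Lh \<le> objF n Om A lam1 lam2 S Lh)"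

definition upper_pairs :: "nat \<Rightarrow> (nat \<times> nat) set" where
  "upper_pairs n = {(i,j). i < j \<and> j < n}"

text \<open>Joint law of the independent upper-triangular entries (A_ij, Omega_ij), i<j:
  A_ij ~ Bernoulli(P_ij), Omega_ij ~ Bernoulli(Pi_ij), all independent.\<close>
definition sample_pmf :: "nat \<Rightarrow> (nat \<Rightarrow> nat \<Rightarrow> real) \<Rightarrow> (nat \<Rightarrow> nat \<Rightarrow> real)
     \<Rightarrow> (nat \<times> nat \<Rightarrow> bool \<times> bool) pmf" where
  "sample_pmf n P Pimat = Pi_pmf (upper_pairs n) (False, False)
      (\<lambda>(i,j). pair_pmf (bernoulli_pmf (P i j)) (bernoulli_pmf (Pimat i j)))"

definition sym_of :: "(nat \<times> nat \<Rightarrow> bool) \<Rightarrow> nat \<Rightarrow> nat \<Rightarrow> real" where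
  "sym_of x i j = (if i < j then of_bool (x (i,j)) else if j < i then of_bool (x (j,i)) else 0)"

definition adjA :: "(nat \<times> nat \<Rightarrow> bool \<times> bool) \<Rightarrow> nat \<Rightarrow> nat \<Rightarrow> real" where
  "adjA w = sym_of (\<lambda>p. fst (w p))"

definition sampO :: "(nat \<times> nat \<Rightarrow> bool \<times> bool) \<Rightarrow> nat \<Rightarrow> nat \<Rightarrow> real" where
  "sampO w = sym_of (\<lambda>p. snd (w p))"

end

theory Submission
  imports Defs
begin

(* Column j of the estimate Sh can only be nonzero if that pays off. Shrinking it by a factor
   1 - t lowers the penalty lam2 * |Sh_j| by t * lam2 * |Sh_j|. Since the residual entries are at
   most A_ij, Cauchy-Schwarz shows that the loss grows by at most 2 t sqrt(d_j) |Sh_j| + O(t^2),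
   where d_j = sum_i Omega_ij A_ij is the observed degree of j. Hence the column vanishes whenever
   2 sqrt(d_j) < lam2. For an inlier j the expected observed degree is at most
   rho nu n + gam nut s <= 2 nu rho n. An exponential-moment (Chernoff) bound then gives
   d_j >= 90 nu rho n with probability at most 1/n^2, because nu rho n >= log n. Since
   4 * 90 < 19^2, a union bound over the inliers proves the theorem with c = 1. *)

definition shrink_column :: "nat \<Rightarrow> real \<Rightarrow> (nat \<Rightarrow> nat \<Rightarrow> real) \<Rightarrow> nat \<Rightarrow> nat \<Rightarrow> real" where
  "shrink_column j t S a b = (if b = j then (1 - t) * S a b else S a b)"

lemma norm21_shrink_column:
  assumes "j < n" and "t \<le> 1"
  shows "norm21 n (shrink_column j t S) = norm21 n S - t * L2_set (\<lambda>i. S i j) {..<n}"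
proof -
  have "L2_set (\<lambda>i. shrink_column j t S i b) {..<n} =
        L2_set (\<lambda>i. S i b) {..<n} - (if b = j then t * L2_set (\<lambda>i. S i j) {..<n} else 0)" for b
    using assms(2) L2_set_right_distrib[of "1 - t" "\<lambda>i. S i j" "{..<n}"]
    by (auto simp: shrink_column_def algebra_simps)
  then show ?thesis
    using assms(1) by (simp add: norm21_def flip: L2_set_def) (simp add: sum_subtractf)
qed

lemma objF_shrink_column:
  fixes Om A S L :: "nat \<Rightarrow> nat \<Rightarrow> real"
  assumes "j < n" and "t \<le> 1" and "Om j j = 0"
    and sym: "\<forall>a<n. \<forall>b<n. Om a b = Om b a \<and> A a b = A b a \<and> L a b = L b a"
  defines "R a b \<equiv> A a b - L a b - S a b - S b a"
  shows "objF n Om A lam1 lam2 (shrink_column j t S) L = objF n Om A lam1 lam2 S L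
      + t * (2 * (\<Sum>i<n. (Om i j)\<^sup>2 * S i j * R i j) + t * (\<Sum>i<n. (Om i j * S i j)\<^sup>2)
             - lam2 * L2_set (\<lambda>i. S i j) {..<n})"
proof -
  define S' where "S' = shrink_column j t S"
  define G where "G i = (Om i j)\<^sup>2 * (2 * t * S i j * R i j + t\<^sup>2 * (S i j)\<^sup>2)" for i
  have entry: "(Om a b * (A a b - L a b - S' a b - S' b a))\<^sup>2 =
      (Om a b * R a b)\<^sup>2 + (if b = j then G a else 0) + (if a = j then G b else 0)"
    if "a < n" "b < n" for a b
    using that sym \<open>Om j j = 0\<close>
    by (auto simp: S'_def shrink_column_def G_def R_def power2_eq_square algebra_simps)
  have "(\<Sum>a<n. \<Sum>b<n. (Om a b * (A a b - L a b - S' a b - S' b a))\<^sup>2) =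
        (\<Sum>a<n. \<Sum>b<n. (Om a b * R a b)\<^sup>2 + (if b = j then G a else 0) + (if a = j then G b else 0))"
    by (intro sum.cong refl) (simp add: entry)
  also have "\<dots> = (\<Sum>a<n. \<Sum>b<n. (Om a b * R a b)\<^sup>2) + 2 * (\<Sum>i<n. G i)"
  proof -
    have "(\<Sum>b<n. if a = j then G b else 0) = (if a = j then \<Sum>b<n. G b else 0)" for a
      by simp
    then show ?thesis
      using \<open>j < n\<close> by (simp add: sum.distrib)
  qed
  finally have "(\<Sum>a<n. \<Sum>b<n. (Om a b * (A a b - L a b - S' a b - S' b a))\<^sup>2) =
        (\<Sum>a<n. \<Sum>b<n. (Om a b * R a b)\<^sup>2) + 2 * (\<Sum>i<n. G i)" .
  moreover have "(\<Sum>i<n. G i) = 2 * t * (\<Sum>i<n. (Om i j)\<^sup>2 * S i j * R i j) + t\<^sup>2 * (\<Sum>i<n. (Om i j * S i j)\<^sup>2)"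
    by (simp add: G_def sum.distrib sum_distrib_left algebra_simps power2_eq_square)
  moreover have "objF n Om A lam1 lam2 S L =
      1/2 * (\<Sum>a<n. \<Sum>b<n. (Om a b * R a b)\<^sup>2) + lam1 * nucnorm n L + lam2 * norm21 n S"
    by (simp add: objF_def R_def)
  ultimately show ?thesis
    unfolding objF_def S'_def norm21_shrink_column[OF \<open>j < n\<close> \<open>t \<le> 1\<close>]
    by (simp add: algebra_simps power2_eq_square)
qed

lemma small_step_decreases_quadratic:
  fixes a K :: real
  assumes "a < 0" and "0 \<le> K"
  obtains t where "0 < t" and "t \<le> 1" and "t * (a + t * K) < 0"
proof
  define t where "t = min 1 (- a / (2 * (K + 1)))"
  show "0 < t" and "t \<le> 1"
    using assms by (auto simp: t_def intro!: divide_neg_pos)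
  have "t * K \<le> - a / (2 * (K + 1)) * K"
    using assms by (intro mult_right_mono) (auto simp: t_def)
  also have "\<dots> < - a"
  proof -
    have "K * a \<le> 0"
      using assms by (intro mult_nonneg_nonpos) auto
    then show ?thesis
      using assms by (simp add: field_simps)
  qed
  finally have "a + t * K < 0"
    by simp
  then show "t * (a + t * K) < 0"
    using \<open>0 < t\<close> by (rule mult_pos_neg[rotated])
qed

lemma estimator_column_eq_zero:
  fixes Om A Sh Lh :: "nat \<Rightarrow> nat \<Rightarrow> real"
  assumes est: "is_estimator n rho Om A lam1 lam2 Sh Lh"
    and sym: "\<forall>a<n. \<forall>b<n. Om a b = Om b a \<and> A a b = A b a"
    and "Om j j = 0" and "j < n"
    and small: "2 * L2_set (\<lambda>i. (Om i j)\<^sup>2 * A i j) {..<n} < lam2"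
    and "i < n"
  shows "Sh i j = 0"
proof -
  have Sh_nonneg: "\<forall>a<n. \<forall>b<n. 0 \<le> Sh a b"
    and Lh: "\<forall>a<n. \<forall>b<n. Lh a b = Lh b a \<and> 0 \<le> Lh a b"
    and min_S: "\<And>S. \<forall>a<n. \<forall>b<n. 0 \<le> S a b \<Longrightarrow>
                  objF n Om A lam1 lam2 Sh Lh \<le> objF n Om A lam1 lam2 S Lh"
    using est unfolding is_estimator_def by auto
  define V where "V = L2_set (\<lambda>a. Sh a j) {..<n}"
  define X where "X = (\<Sum>a<n. (Om a j)\<^sup>2 * Sh a j * (A a j - Lh a j - Sh a j - Sh j a))"
  define K where "K = (\<Sum>a<n. (Om a j * Sh a j)\<^sup>2)"
  have "V = 0"
  proof (rule ccontr)
    assume "V \<noteq> 0"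
    then have "0 < V"
      by (simp add: V_def order_less_le)
    have "X \<le> (\<Sum>a<n. (Om a j)\<^sup>2 * A a j * Sh a j)"
      unfolding X_def
    proof (intro sum_mono)
      fix a
      assume "a \<in> {..<n}"
      then have "0 \<le> Lh a j" and "0 \<le> Sh a j" and "0 \<le> Sh j a"
        using Sh_nonneg Lh \<open>j < n\<close> by auto
      then have "A a j - Lh a j - Sh a j - Sh j a \<le> A a j" and "0 \<le> (Om a j)\<^sup>2 * Sh a j"
        by auto
      from mult_left_mono[OF this]
      show "(Om a j)\<^sup>2 * Sh a j * (A a j - Lh a j - Sh a j - Sh j a) \<le> (Om a j)\<^sup>2 * A a j * Sh a j"
        by (simp add: ac_simps)
    qed
    also have "\<dots> \<le> (\<Sum>a<n. \<bar>(Om a j)\<^sup>2 * A a j\<bar> * \<bar>Sh a j\<bar>)"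
      by (intro sum_mono) (metis abs_ge_self abs_mult)
    also have "\<dots> \<le> L2_set (\<lambda>a. (Om a j)\<^sup>2 * A a j) {..<n} * V"
      unfolding V_def by (rule L2_set_mult_ineq)
    also have "\<dots> < lam2 / 2 * V"
      using small \<open>0 < V\<close> by (intro mult_strict_right_mono) auto
    finally have "2 * X - lam2 * V < 0"
      by simp
    moreover have "0 \<le> K"
      by (simp add: K_def sum_nonneg)
    ultimately obtain t where "0 < t" "t \<le> 1" and descent: "t * (2 * X - lam2 * V + t * K) < 0"
      by (rule small_step_decreases_quadratic)
    have "\<forall>a<n. \<forall>b<n. 0 \<le> shrink_column j t Sh a b"
      using Sh_nonneg \<open>t \<le> 1\<close> by (simp add: shrink_column_def)
    then have "objF n Om A lam1 lam2 Sh Lh \<le> objF n Om A lam1 lam2 (shrink_column j t Sh) Lh"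
      by (rule min_S)
    also have "\<dots> = objF n Om A lam1 lam2 Sh Lh + t * (2 * X + t * K - lam2 * V)"
      unfolding X_def K_def V_def using sym Lh
      by (intro objF_shrink_column \<open>j < n\<close> \<open>t \<le> 1\<close> \<open>Om j j = 0\<close>) auto
    finally show False
      using descent by (simp add: algebra_simps)
  qed
  then show ?thesis
    using \<open>i < n\<close> by (simp add: V_def L2_set_eq_0_iff)
qed

definition observed_degree :: "nat \<Rightarrow> nat \<Rightarrow> (nat \<times> nat \<Rightarrow> bool \<times> bool) \<Rightarrow> real" where
  "observed_degree n j w = (\<Sum>i<n. sampO w i j * adjA w i j)"

lemma estimator_column_eq_zero_if_low_observed_degree:
  assumes "is_estimator n rho (sampO w) (adjA w) lam1 lam2 Sh Lh"
    and "j < n" and "i < n" and "0 < lam2" and "4 * observed_degree n j w < lam2\<^sup>2"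
  shows "Sh i j = 0"
proof (rule estimator_column_eq_zero[OF assms(1) _ _ \<open>j < n\<close> _ \<open>i < n\<close>])
  have "((sampO w i j)\<^sup>2 * adjA w i j)\<^sup>2 = sampO w i j * adjA w i j" for i
    by (simp add: sampO_def adjA_def sym_of_def)
  then have "L2_set (\<lambda>i. (sampO w i j)\<^sup>2 * adjA w i j) {..<n} = sqrt (observed_degree n j w)"
    by (simp only: L2_set_def observed_degree_def)
  moreover have "(2 * sqrt (observed_degree n j w))\<^sup>2 < lam2\<^sup>2"
    using assms(5) by (simp add: power_mult_distrib observed_degree_def sampO_def adjA_def sym_of_def sum_nonneg)
  ultimately show "2 * L2_set (\<lambda>i. (sampO w i j)\<^sup>2 * adjA w i j) {..<n} < lam2"
    using \<open>0 < lam2\<close> power_less_imp_less_base by fastforce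
qed (auto simp: sampO_def adjA_def sym_of_def)

definition incident_pairs :: "nat \<Rightarrow> nat \<Rightarrow> (nat \<times> nat) set" where
  "incident_pairs n j = {p \<in> upper_pairs n. fst p = j \<or> snd p = j}"

lemma finite_upper_pairs [simp]: "finite (upper_pairs n)"
  by (rule finite_subset[of _ "{..<n} \<times> {..<n}"]) (auto simp: upper_pairs_def)

lemma incident_pairs_subset: "incident_pairs n j \<subseteq> upper_pairs n"
  by (auto simp: incident_pairs_def)

lemma sum_incident_pairs:
  assumes "j < n"
  shows "(\<Sum>p\<in>incident_pairs n j. f p) = (\<Sum>i\<in>{..<n} - {j}. f (min i j, max i j))"
proof -
  have "bij_betw (\<lambda>i. (min i j, max i j)) ({..<n} - {j}) (incident_pairs n j)"
  proof (rule bij_betw_imageI)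
    show "inj_on (\<lambda>i. (min i j, max i j)) ({..<n} - {j})"
      by (auto simp: inj_on_def min_def max_def)
    show "(\<lambda>i. (min i j, max i j)) ` ({..<n} - {j}) = incident_pairs n j"
    proof
      show "incident_pairs n j \<subseteq> (\<lambda>i. (min i j, max i j)) ` ({..<n} - {j})"
      proof
        fix p
        assume "p \<in> incident_pairs n j"
        then obtain a b where "p = (a, b)" "a < b" "b < n" "a = j \<or> b = j"
          by (auto simp: incident_pairs_def upper_pairs_def)
        then show "p \<in> (\<lambda>i. (min i j, max i j)) ` ({..<n} - {j})"
          by (auto simp: image_iff min_def max_def intro: bexI[of _ a] bexI[of _ b])
      qed
    qed (use assms in \<open>auto simp: incident_pairs_def upper_pairs_def min_def max_def\<close>)
  qed
  from sum.reindex_bij_betw[OF this, of f] show ?thesis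
    by simp
qed

lemma observed_degree_eq_sum_incident_pairs:
  assumes "j < n"
  shows "observed_degree n j w = (\<Sum>p\<in>incident_pairs n j. of_bool (fst (w p) \<and> snd (w p)))"
proof -
  have "observed_degree n j w = (\<Sum>i\<in>{..<n} - {j}. sampO w i j * adjA w i j)"
    unfolding observed_degree_def using assms
    by (simp add: sum.remove[of "{..<n}" j] sampO_def adjA_def sym_of_def)
  also have "\<dots> = (\<Sum>i\<in>{..<n} - {j}. of_bool (fst (w (min i j, max i j)) \<and> snd (w (min i j, max i j))))"
    by (intro sum.cong) (auto simp: sampO_def adjA_def sym_of_def min_def max_def)
  finally show ?thesis
    using assms by (simp add: sum_incident_pairs)
qed

lemma finite_set_pmf_sample_pmf: "finite (set_pmf (sample_pmf n P Pimat))"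
  by (auto simp: sample_pmf_def set_Pi_pmf intro!: finite_PiE_dflt)

lemma prob_ge_le_exp_moment:
  fixes X :: "'a \<Rightarrow> real"
  assumes "finite (set_pmf M)"
  shows "measure_pmf.prob M {x. tau \<le> X x} \<le> measure_pmf.expectation M (\<lambda>x. exp (X x)) / exp tau"
proof -
  have "measure_pmf.prob M {x. tau \<le> X x} = measure_pmf.prob M {x \<in> space M. exp tau \<le> exp (X x)}"
    by simp
  also have "\<dots> \<le> measure_pmf.expectation M (\<lambda>x. exp (X x)) / exp tau"
    using assms by (intro integral_Markov_inequality_measure integrable_measure_pmf_finite) auto
  finally show ?thesis .
qed

lemma expectation_exp_pair_bernoulli_le:
  assumes "0 \<le> a" "a \<le> 1" "0 \<le> b" "b \<le> 1"
  shows "measure_pmf.expectation (pair_pmf (bernoulli_pmf a) (bernoulli_pmf b))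
           (\<lambda>x. exp (of_bool (fst x \<and> snd x))) \<le> exp (2 * (a * b))"
proof -
  have UNIV_bool2: "(UNIV :: (bool \<times> bool) set) = {(True, True), (True, False), (False, True), (False, False)}"
    by auto
  have "measure_pmf.expectation (pair_pmf (bernoulli_pmf a) (bernoulli_pmf b))
           (\<lambda>x. exp (of_bool (fst x \<and> snd x))) = 1 + (exp 1 - 1) * (a * b)"
    using assms by (subst integral_measure_pmf[of UNIV]) (auto simp: UNIV_bool2 pmf_pair algebra_simps)
  also have "\<dots> \<le> 1 + 2 * (a * b)"
    using assms exp_le by (intro add_left_mono mult_right_mono) auto
  also have "\<dots> \<le> exp (2 * (a * b))"
    by (rule exp_ge_add_one_self)
  finally show ?thesis .
qed

lemma expectation_exp_observed_degree_le:
  assumes "j < n"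
    and P: "\<forall>a<n. \<forall>b<n. 0 \<le> P a b \<and> P a b \<le> 1 \<and> P a b = P b a"
    and Pimat: "\<forall>a<n. \<forall>b<n. 0 \<le> Pimat a b \<and> Pimat a b \<le> 1 \<and> Pimat a b = Pimat b a"
  shows "measure_pmf.expectation (sample_pmf n P Pimat) (\<lambda>w. exp (observed_degree n j w))
           \<le> exp (2 * (\<Sum>i<n. P i j * Pimat i j))"
proof -
  define T where "T = incident_pairs n j"
  define Q where "Q = (\<lambda>(a, b). pair_pmf (bernoulli_pmf (P a b)) (bernoulli_pmf (Pimat a b)))"
  define h :: "bool \<times> bool \<Rightarrow> real" where "h x = exp (of_bool (fst x \<and> snd x))" for x
  have "finite T"
    unfolding T_def using incident_pairs_subset finite_upper_pairs by (rule finite_subset)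
  have exp_degree: "exp (observed_degree n j w) = (\<Prod>p\<in>T. h (w p))" for w
    unfolding observed_degree_eq_sum_incident_pairs[OF \<open>j < n\<close>] T_def[symmetric] h_def
    by (rule exp_sum[OF \<open>finite T\<close>])
  have sample_pmf_Pi: "sample_pmf n P Pimat = Pi_pmf (upper_pairs n) (False, False) Q"
    by (simp add: sample_pmf_def Q_def)
  have "measure_pmf.expectation (sample_pmf n P Pimat) (\<lambda>w. exp (observed_degree n j w))
          = measure_pmf.expectation (Pi_pmf T (False, False) Q) (\<lambda>w. \<Prod>p\<in>T. h (w p))"
    unfolding sample_pmf_Pi exp_degree T_def
    by (simp add: Pi_pmf_subset[OF finite_upper_pairs incident_pairs_subset])
  also have "\<dots> = (\<Prod>p\<in>T. measure_pmf.expectation (Q p) h)"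
    using \<open>finite T\<close> by (intro expectation_prod_Pi_pmf integrable_measure_pmf_finite) (auto simp: h_def)
  also have "\<dots> \<le> (\<Prod>p\<in>T. exp (2 * (P (fst p) (snd p) * Pimat (fst p) (snd p))))"
  proof (intro prod_mono conjI)
    fix p
    assume "p \<in> T"
    then have "fst p < n" "snd p < n"
      by (auto simp: T_def incident_pairs_def upper_pairs_def)
    then show "measure_pmf.expectation (Q p) h \<le> exp (2 * (P (fst p) (snd p) * Pimat (fst p) (snd p)))"
      using P Pimat unfolding Q_def h_def by (auto simp: case_prod_beta intro!: expectation_exp_pair_bernoulli_le)
  qed (auto simp: h_def intro!: Bochner_Integration.integral_nonneg)
  also have "\<dots> = exp (2 * (\<Sum>p\<in>T. P (fst p) (snd p) * Pimat (fst p) (snd p)))"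
    using \<open>finite T\<close> by (simp add: exp_sum sum_distrib_left)
  also have "(\<Sum>p\<in>T. P (fst p) (snd p) * Pimat (fst p) (snd p)) = (\<Sum>i\<in>{..<n} - {j}. P i j * Pimat i j)"
    unfolding T_def sum_incident_pairs[OF \<open>j < n\<close>]
    using P Pimat \<open>j < n\<close> by (intro sum.cong) (auto simp: min_def max_def)
  also have "exp (2 * (\<Sum>i\<in>{..<n} - {j}. P i j * Pimat i j)) \<le> exp (2 * (\<Sum>i<n. P i j * Pimat i j))"
    using P Pimat \<open>j < n\<close> by (auto intro!: sum_mono2)
  finally show ?thesis .
qed

lemma observed_degree_tail:
  assumes "j < n"
    and "\<forall>a<n. \<forall>b<n. 0 \<le> P a b \<and> P a b \<le> 1 \<and> P a b = P b a"
    and "\<forall>a<n. \<forall>b<n. 0 \<le> Pimat a b \<and> Pimat a b \<le> 1 \<and> Pimat a b = Pimat b a"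
    and "(\<Sum>i<n. P i j * Pimat i j) \<le> beta" and "2 * beta + 2 * ln (real n) \<le> tau"
  shows "measure_pmf.prob (sample_pmf n P Pimat) {w. tau \<le> observed_degree n j w} \<le> 1 / (real n)\<^sup>2"
proof -
  have "measure_pmf.prob (sample_pmf n P Pimat) {w. tau \<le> observed_degree n j w}
          \<le> measure_pmf.expectation (sample_pmf n P Pimat) (\<lambda>w. exp (observed_degree n j w)) / exp tau"
    by (rule prob_ge_le_exp_moment[OF finite_set_pmf_sample_pmf])
  also have "\<dots> \<le> exp (2 * (\<Sum>i<n. P i j * Pimat i j)) / exp tau"
    using assms(1-3) by (intro divide_right_mono expectation_exp_observed_degree_le) auto
  also have "\<dots> \<le> exp (- (2 * ln (real n)))"
    using assms(4,5) by (simp add: exp_diff[symmetric])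
  also have "\<dots> \<le> 1 / (real n)\<^sup>2"
    using \<open>j < n\<close> by (simp add: exp_minus exp_of_nat_mult[of 2, simplified] inverse_eq_divide)
  finally show ?thesis .
qed

lemma prob_UN_le_inverse:
  fixes I :: "nat set"
  assumes "\<And>j. j \<in> I \<Longrightarrow> measure_pmf.prob M (B j) \<le> 1 / (real n)\<^sup>2" and "I \<subseteq> {..<n}"
  shows "measure_pmf.prob M (\<Union>j\<in>I. B j) \<le> 1 / real n"
proof -
  have "measure_pmf.prob M (\<Union>j\<in>I. B j) \<le> (\<Sum>j\<in>I. measure_pmf.prob M (B j))"
    using assms(2) by (intro measure_pmf.finite_measure_subadditive_finite) (auto intro: finite_subset)
  also have "\<dots> \<le> real (card I) / (real n)\<^sup>2"
    using sum_mono[of I _ "\<lambda>_. 1 / (real n)\<^sup>2", OF assms(1)] by simp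
  also have "\<dots> \<le> real n / (real n)\<^sup>2"
    using card_mono[OF _ assms(2)] by (simp add: divide_right_mono)
  also have "\<dots> = 1 / real n"
    by (simp add: power2_eq_square)
  finally show ?thesis .
qed

lemma inlier_expected_degree_le:
  fixes Inl :: "nat set"
  assumes Inl: "Inl \<subseteq> {..<n}" and "j \<in> Inl"
    and L_le: "\<forall>a<n. \<forall>b<n. Lstar a b \<le> rho"
    and L_out: "\<forall>a<n. \<forall>b<n. (a \<in> {..<n} - Inl \<or> b \<in> {..<n} - Inl) \<longrightarrow> Lstar a b = 0"
    and S_le: "\<forall>a<n. \<forall>b<n. Sstar a b \<le> gam"
    and S_in: "\<forall>a<n. \<forall>b\<in>Inl. Sstar a b = 0"
    and Pimat: "\<forall>a<n. \<forall>b<n. Pimat a b = Pimat b a \<and> 0 \<le> Pimat a b"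
    and deg_in: "\<forall>a\<in>Inl. (\<Sum>b\<in>Inl. Pimat a b) \<le> nu * real n"
    and deg_out: "\<forall>a<n. (\<Sum>b\<in>{..<n} - Inl. Pimat a b) \<le> nut * real (card ({..<n} - Inl))"
    and "0 \<le> rho" and "0 \<le> gam"
  shows "(\<Sum>i<n. (Lstar i j + Sstar i j + Sstar j i) * Pimat i j)
           \<le> rho * (nu * real n) + gam * (nut * real (card ({..<n} - Inl)))"
proof -
  define Out where "Out = {..<n} - Inl"
  have "j < n"
    using Inl \<open>j \<in> Inl\<close> by auto
  have "(\<Sum>i<n. (Lstar i j + Sstar i j + Sstar j i) * Pimat i j)
      = (\<Sum>i\<in>Inl. (Lstar i j + Sstar i j + Sstar j i) * Pimat i j)
        + (\<Sum>i\<in>Out. (Lstar i j + Sstar i j + Sstar j i) * Pimat i j)"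
    unfolding Out_def using sum.subset_diff[OF Inl finite_lessThan] by (simp add: add.commute)
  also have "(\<Sum>i\<in>Inl. (Lstar i j + Sstar i j + Sstar j i) * Pimat i j) \<le> (\<Sum>i\<in>Inl. rho * Pimat j i)"
  proof (intro sum_mono)
    fix i
    assume "i \<in> Inl"
    with Inl \<open>j \<in> Inl\<close> \<open>j < n\<close> L_le S_in Pimat
    have "Lstar i j + Sstar i j + Sstar j i \<le> rho" and "Pimat i j = Pimat j i" and "0 \<le> Pimat i j"
      by auto
    then show "(Lstar i j + Sstar i j + Sstar j i) * Pimat i j \<le> rho * Pimat j i"
      by (metis mult_right_mono)
  qed
  also have "\<dots> \<le> rho * (nu * real n)"
    using deg_in \<open>j \<in> Inl\<close> \<open>0 \<le> rho\<close> by (simp add: sum_distrib_left[symmetric] mult_left_mono)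
  also have "(\<Sum>i\<in>Out. (Lstar i j + Sstar i j + Sstar j i) * Pimat i j) \<le> (\<Sum>i\<in>Out. gam * Pimat j i)"
  proof (intro sum_mono)
    fix i
    assume "i \<in> Out"
    with \<open>j \<in> Inl\<close> \<open>j < n\<close> L_out S_le S_in Pimat
    have "Lstar i j + Sstar i j + Sstar j i \<le> gam" and "Pimat i j = Pimat j i" and "0 \<le> Pimat i j"
      by (auto simp: Out_def)
    then show "(Lstar i j + Sstar i j + Sstar j i) * Pimat i j \<le> gam * Pimat j i"
      by (metis mult_right_mono)
  qed
  also have "\<dots> \<le> gam * (nut * real (card Out))"
    using deg_out \<open>j < n\<close> \<open>0 \<le> gam\<close> by (simp add: Out_def sum_distrib_left[symmetric] mult_left_mono)
  finally show ?thesis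
    by (simp add: Out_def)
qed

lemma prob_inlier_columns_eq_zero_ge:
  fixes Inl :: "nat set" and Lstar Sstar Pimat :: "nat \<Rightarrow> nat \<Rightarrow> real"
  defines "P \<equiv> \<lambda>i j. Lstar i j + Sstar i j + Sstar j i"
  assumes "2 \<le> n" and Inl: "Inl \<subseteq> {..<n}"
    and L: "\<forall>i<n. \<forall>j<n. Lstar i j = Lstar j i \<and> 0 \<le> Lstar i j \<and> Lstar i j \<le> rho"
    and L_out: "\<forall>i<n. \<forall>j<n. (i \<in> {..<n} - Inl \<or> j \<in> {..<n} - Inl) \<longrightarrow> Lstar i j = 0"
    and S: "\<forall>i<n. \<forall>j<n. 0 \<le> Sstar i j \<and> Sstar i j \<le> gam"
    and S_in: "\<forall>i<n. \<forall>j\<in>Inl. Sstar i j = 0"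
    and P: "\<forall>i<n. \<forall>j<n. 0 \<le> P i j \<and> P i j \<le> 1"
    and Pimat: "\<forall>i<n. \<forall>j<n. Pimat i j = Pimat j i \<and> 0 \<le> Pimat i j \<and> Pimat i j \<le> 1"
    and deg_in: "\<forall>i\<in>Inl. (\<Sum>j\<in>Inl. Pimat i j) \<le> nu * real n"
    and deg_out: "\<forall>i<n. (\<Sum>j\<in>{..<n} - Inl. Pimat i j) \<le> nut * real (card ({..<n} - Inl))"
    and sparsity: "ln (real n) / real n \<le> nu * rho"
    and balance: "nut * gam * real (card ({..<n} - Inl)) \<le> nu * rho * real n"
    and lam2: "lam2 = 19 * sqrt (nu * rho * real n)"
  shows "1 - 1 / real n \<le> measure_pmf.prob (sample_pmf n P Pimat)
           {w. \<forall>Sh Lh. is_estimator n rho (sampO w) (adjA w) lam1 lam2 Sh Lh \<longrightarrow>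
                 (\<forall>j\<in>Inl. \<forall>i<n. Sh i j = 0)}"
    (is "_ \<le> measure_pmf.prob ?M ?good")
proof -
  define m where "m = nu * rho * real n"
  define B where "B j = {w. 90 * m \<le> observed_degree n j w}" for j
  have "0 < real n" and "0 < ln (real n)"
    using \<open>2 \<le> n\<close> by auto
  moreover have "ln (real n) \<le> m"
    using sparsity \<open>0 < real n\<close> by (simp add: m_def divide_le_eq)
  ultimately have "0 < m"
    by linarith
  have "0 \<le> rho" and "0 \<le> gam"
    using L[rule_format, of 0 0] S[rule_format, of 0 0] \<open>2 \<le> n\<close> by auto
  have tail: "measure_pmf.prob ?M (B j) \<le> 1 / (real n)\<^sup>2" if "j \<in> Inl" for j
  proof -
    have "(\<Sum>i<n. P i j * Pimat i j) \<le> 2 * m"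
      using inlier_expected_degree_le[OF Inl \<open>j \<in> Inl\<close> _ L_out _ S_in _ deg_in deg_out \<open>0 \<le> rho\<close> \<open>0 \<le> gam\<close>]
        L S Pimat balance by (simp add: P_def m_def algebra_simps)
    then show ?thesis
      unfolding B_def using Inl \<open>j \<in> Inl\<close> L P Pimat \<open>ln (real n) \<le> m\<close> \<open>0 < m\<close>
      by (intro observed_degree_tail[where beta = "2 * m"]) (auto simp: P_def)
  qed
  then have bad: "measure_pmf.prob ?M (\<Union>j\<in>Inl. B j) \<le> 1 / real n"
    using Inl by (rule prob_UN_le_inverse)
  have "UNIV - (\<Union>j\<in>Inl. B j) \<subseteq> ?good"
  proof safe
    fix w Sh Lh j i
    assume "w \<notin> (\<Union>j\<in>Inl. B j)" and "j \<in> Inl" and "i < n"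
      and "is_estimator n rho (sampO w) (adjA w) lam1 lam2 Sh Lh"
    moreover have "lam2\<^sup>2 = 361 * m" and "0 < lam2"
      using \<open>0 < m\<close> by (auto simp: lam2 m_def power_mult_distrib)
    ultimately show "Sh i j = 0"
      using Inl \<open>0 < m\<close> by (intro estimator_column_eq_zero_if_low_observed_degree) (auto simp: B_def)
  qed
  then have "measure_pmf.prob ?M (UNIV - (\<Union>j\<in>Inl. B j)) \<le> measure_pmf.prob ?M ?good"
    by (intro measure_pmf.finite_measure_mono) auto
  with bad show ?thesis
    using measure_pmf.prob_compl[of "\<Union>j\<in>Inl. B j" ?M] by simp
qed

theorem theorem2:
  shows "\<exists>c::real. c > 0 \<and>
    (\<forall>(n::nat) (Inl::nat set) (k::nat) (rho::real) (gam::real) (mu::real) (nu::real) (nut::real)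
       (Lstar::nat \<Rightarrow> nat \<Rightarrow> real) (Sstar::nat \<Rightarrow> nat \<Rightarrow> real) (Pimat::nat \<Rightarrow> nat \<Rightarrow> real)
       (lam1::real) (lam2::real).
     let Out = {..<n} - Inl; s = card Out;
         P = (\<lambda>i j. Lstar i j + Sstar i j + Sstar j i) in
     n \<ge> 2 \<and> Inl \<subseteq> {..<n} \<and>
     0 < rho \<and> rho \<le> 1/2 \<and> 0 < gam \<and> gam \<le> 1 \<and> k \<ge> 1 \<and>
     \<comment> \<open>L*: symmetric, rank k, entries in [0,rho], vanishing on outlier rows/columns\<close>
     (\<forall>i<n. \<forall>j<n. Lstar i j = Lstar j i \<and> 0 \<le> Lstar i j \<and> Lstar i j \<le> rho) \<and>
     mrank n Lstar = k \<and>
     (\<forall>i<n. \<forall>j<n. (i \<in> Out \<or> j \<in> Out) \<longrightarrow> Lstar i j = 0) \<and>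
     \<comment> \<open>S*: entries in [0,gam], zero diagonal, zero inlier columns\<close>
     (\<forall>i<n. \<forall>j<n. 0 \<le> Sstar i j \<and> Sstar i j \<le> gam) \<and>
     (\<forall>i<n. Sstar i i = 0) \<and>
     (\<forall>i<n. \<forall>j\<in>Inl. Sstar i j = 0) \<and>
     (\<forall>i<n. \<forall>j<n. 0 \<le> P i j \<and> P i j \<le> 1) \<and>
     \<comment> \<open>Pimat = E[Omega]: symmetric, zero diagonal, entries in [0,1]\<close>
     (\<forall>i<n. \<forall>j<n. Pimat i j = Pimat j i \<and> 0 \<le> Pimat i j \<and> Pimat i j \<le> 1) \<and>
     (\<forall>i<n. Pimat i i = 0) \<and>
     \<comment> \<open>Assumption 1\<close>
     mu > 0 \<and> (\<forall>i\<in>Inl. \<forall>j\<in>Inl. i \<noteq> j \<longrightarrow> Pimat i j \<ge> mu) \<and>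
     0 < nu \<and> nu \<le> 1 \<and> 0 < nut \<and> nut \<le> 1 \<and>
     (\<forall>i\<in>Inl. (\<Sum>j\<in>Inl. Pimat i j) \<le> nu * real n) \<and>
     (\<forall>i<n. (\<Sum>j\<in>Out. Pimat i j) \<le> nut * real s) \<and>
     \<comment> \<open>Assumption 2\<close>
     nu * rho \<ge> ln (real n) / real n \<and> nut * gam \<ge> ln (real n) / real n \<and>
     \<comment> \<open>Assumption 3\<close>
     nu * rho * real n \<ge> nut * gam * real s \<and>
     lam1 > 0 \<and> lam2 = 19 * sqrt (nu * rho * real n)
     \<longrightarrow>
     measure_pmf.prob (sample_pmf n P Pimat)
       {w. \<forall>Sh Lh. is_estimator n rho (sampO w) (adjA w) lam1 lam2 Sh Lh \<longrightarrow>
              (\<forall>j\<in>Inl. \<forall>i<n. Sh i j = 0)}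
       \<ge> 1 - c / real n)"
  unfolding Let_def
  by (intro exI[of _ 1] conjI allI impI, simp, elim conjE, rule prob_inlier_columns_eq_zero_ge, assumption+)

end
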